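(* Let $(G,u,v,\alpha,\beta)$ be a Guvab. Then $W(\mu_k,\nu_k)\to0$ as $k\to\infty$ if and only if one of the following holds: (1) $0<\alpha\le\beta<1$; (2) $\alpha=\beta=1$ and $u=v$; (3) $G$ is not bipartite and $0=\alpha\le\beta<1$; (4) $\alpha=\beta=0$ and there exists a walk from $u$ to $v$ with an even number of steps.
   Context: A Guvab is a tuple $(G,u,v,\alpha,\beta)$ where $G$ is a finite, connected, simple graph, $u,v\in V(G)$, and $\alpha,\beta\in[0,1]$ with $\alpha\le\beta$. A random walk on $G$ with starting vertex $w$ and laziness $\gamma$ is the Markov chain $R_0=w$ and, for $i\ge1$, $R_i=R_{i-1}$ with probability $\gamma$ and $R_i=t$ with probability $\frac{1-\gamma}{\deg(R_{i-1})}$ for each neighbor $t$ of $R_{i-1}$. $\mu_k$ is the distribution after $k$ steps of the walk from $u$ with laziness $\alpha$, and $\nu_k$ that of the walk from $v$ with laziness $\beta$. $W(\mu,\nu)$ is the Wasserstein ($L^1$ optimal transport) distance with respect to the graph distance: the minimum over transportation plans (nonnegative $T$ on $V(G)\times V(G)$ with marginals $\mu,\nu$) of $\sum d(w_1,w_2)T(w_1,w_2)$. *)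

theory Defs
  imports "HOL-Analysis.Analysis"
begin

definition simple_graph :: "'a set \<Rightarrow> ('a \<Rightarrow> 'a \<Rightarrow> bool) \<Rightarrow> bool" where
  "simple_graph V E \<longleftrightarrow> finite V \<and> (\<forall>x y. E x y \<longrightarrow> x \<in> V \<and> y \<in> V)
     \<and> (\<forall>x y. E x y \<longrightarrow> E y x) \<and> (\<forall>x. \<not> E x x)"

inductive walk :: "('a \<Rightarrow> 'a \<Rightarrow> bool) \<Rightarrow> nat \<Rightarrow> 'a \<Rightarrow> 'a \<Rightarrow> bool" for E where
  walk0: "walk E 0 x x"
| walkS: "E x y \<Longrightarrow> walk E n y z \<Longrightarrow> walk E (Suc n) x z"

definition connected_graph :: "'a set \<Rightarrow> ('a \<Rightarrow> 'a \<Rightarrow> bool) \<Rightarrow> bool" where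
  "connected_graph V E \<longleftrightarrow> (\<forall>x\<in>V. \<forall>y\<in>V. \<exists>n. walk E n x y)"

definition bipartite :: "'a set \<Rightarrow> ('a \<Rightarrow> 'a \<Rightarrow> bool) \<Rightarrow> bool" where
  "bipartite V E \<longleftrightarrow> (\<exists>A. A \<subseteq> V \<and> (\<forall>x y. E x y \<longrightarrow> (x \<in> A \<longleftrightarrow> y \<notin> A)))"

definition gdist :: "('a \<Rightarrow> 'a \<Rightarrow> bool) \<Rightarrow> 'a \<Rightarrow> 'a \<Rightarrow> nat" where
  "gdist E x y = (LEAST n. walk E n x y)"

definition deg :: "'a set \<Rightarrow> ('a \<Rightarrow> 'a \<Rightarrow> bool) \<Rightarrow> 'a \<Rightarrow> nat" where
  "deg V E x = card {y\<in>V. E x y}"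

definition walk_step :: "'a set \<Rightarrow> ('a \<Rightarrow> 'a \<Rightarrow> bool) \<Rightarrow> real \<Rightarrow> ('a \<Rightarrow> real) \<Rightarrow> ('a \<Rightarrow> real)" where
  "walk_step V E \<gamma> \<mu> = (\<lambda>w. \<gamma> * \<mu> w + (\<Sum>t\<in>{t\<in>V. E t w}. (1 - \<gamma>) / real (deg V E t) * \<mu> t))"

definition walk_dist :: "'a set \<Rightarrow> ('a \<Rightarrow> 'a \<Rightarrow> bool) \<Rightarrow> real \<Rightarrow> 'a \<Rightarrow> nat \<Rightarrow> ('a \<Rightarrow> real)" where
  "walk_dist V E \<gamma> w k = (walk_step V E \<gamma> ^^ k) (\<lambda>x. if x = w then 1 else 0)"

definition transport_plan :: "'a set \<Rightarrow> ('a \<Rightarrow> real) \<Rightarrow> ('a \<Rightarrow> real) \<Rightarrow> ('a \<Rightarrow> 'a \<Rightarrow> real) \<Rightarrow> bool" where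
  "transport_plan V \<mu> \<nu> T \<longleftrightarrow> (\<forall>a\<in>V. \<forall>b\<in>V. T a b \<ge> 0)
     \<and> (\<forall>a\<in>V. (\<Sum>b\<in>V. T a b) = \<mu> a) \<and> (\<forall>b\<in>V. (\<Sum>a\<in>V. T a b) = \<nu> b)"

definition wasserstein :: "'a set \<Rightarrow> ('a \<Rightarrow> 'a \<Rightarrow> bool) \<Rightarrow> ('a \<Rightarrow> real) \<Rightarrow> ('a \<Rightarrow> real) \<Rightarrow> real" where
  "wasserstein V E \<mu> \<nu> = Inf {(\<Sum>a\<in>V. \<Sum>b\<in>V. real (gdist E a b) * T a b) | T. transport_plan V \<mu> \<nu> T}"

end

theory Submission
  imports Defs
begin

text \<open>
The Wasserstein distance is squeezed between \<open>|\<mu>(S) - \<nu>(S)|\<close> for every vertex set S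
(indicators are 1-Lipschitz, as distinct vertices have distance at least 1) and the diameter
times the \<open>l1\<close> distance of \<open>\<mu>\<close> and \<open>\<nu>\<close> (leave the common mass in place, move only the
excess).

Convergence: if every vertex of a set S reaches a fixed vertex b in exactly m steps of the
walk, then m steps shrink the \<open>l1\<close> norm of every signed measure of total mass 0 living on S
by a fixed factor \<open>< 1\<close> (a Doeblin argument). For a lazy walk, or on a non-bipartite graph,
this applies with S = V, so both walks converge to the stationary distribution
\<open>deg / 2|E|\<close>. For two non-lazy walks on a bipartite graph started an even distance apart it
applies to the side of the bipartition containing both starting points.

Divergence: a walk with laziness 1 never moves, while one with laziness \<open>\<alpha> < 1\<close> keeps at
most \<open>\<alpha> p + (1 - \<alpha>)(1 - p)\<close> at a vertex of mass p. On a bipartite graph a non-lazy walk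
alternates between the two sides; a lazy walk keeps a fraction \<open>\<beta>\<close> of its mass on each side,
and a non-lazy walk started at odd distance is always on the other side.
\<close>

lemma walk_snoc: "walk R n a b \<Longrightarrow> R b c \<Longrightarrow> walk R (Suc n) a c"
  by (induction rule: walk.induct) (auto intro: walk.intros)

lemma walk_append: "walk R n a b \<Longrightarrow> walk R k b c \<Longrightarrow> walk R (n + k) a c"
  by (induction rule: walk.induct) (auto intro: walk.intros)

lemma walk_mono: "walk R n a b \<Longrightarrow> (\<And>x y. R x y \<Longrightarrow> R' x y) \<Longrightarrow> walk R' n a b"
  by (induction rule: walk.induct) (auto intro: walk.intros)

lemma walk_0_eq: "walk R 0 a b \<Longrightarrow> a = b"
  by (auto elim: walk.cases)

lemma walk_add_loops: "(\<And>x. R x x) \<Longrightarrow> walk R n a b \<Longrightarrow> walk R (k + n) a b"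
  by (induction k) (auto intro: walk.intros)

lemma walk_add_even:
  assumes "R b c" "R c b" "walk R n a b" "n \<le> m" "even n = even m"
  shows "walk R m a b"
proof -
  have "even (m - n)" using assms(4,5) by auto
  then obtain k where "m - n = 2 * k" by blast
  then have m: "m = n + 2 * k" using assms(4) by simp
  have "walk R (n + 2 * k) a b" for k
  proof (induction k)
    case (Suc k)
    then have "walk R (Suc (Suc (n + 2 * k))) a b" using assms(1,2) by (meson walk_snoc)
    then show ?case by simp
  qed (use assms(3) in simp)
  then show ?thesis unfolding m .
qed

lemma gdist_refl: "gdist E a a = 0"
  unfolding gdist_def by (simp add: walk0)

lemma walk_parity:
  assumes "\<And>x y. E x y \<Longrightarrow> (x \<in> A \<longleftrightarrow> y \<notin> A)"
  shows "walk E n x y \<Longrightarrow> (y \<in> A \<longleftrightarrow> (x \<in> A \<longleftrightarrow> even n))"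
  by (induction rule: walk.induct) (auto dest: assms)

lemma common_even_walk_length:
  assumes "finite S" "R u c" "R c u" and even_walks: "\<And>a. a \<in> S \<Longrightarrow> \<exists>n. even n \<and> walk R n a u"
  shows "\<exists>m>0. \<forall>a\<in>S. walk R m a u"
proof -
  obtain f where f: "\<And>a. a \<in> S \<Longrightarrow> even (f a) \<and> walk R (f a) a u"
    using even_walks by metis
  have "walk R (2 * (\<Sum>a\<in>S. f a) + 2) a u" if "a \<in> S" for a
  proof (rule walk_add_even[where R = R, OF assms(2,3)])
    show "f a \<le> 2 * (\<Sum>a\<in>S. f a) + 2"
      using member_le_sum[OF that _ assms(1), of f] by simp
  qed (use f that in auto)
  then show ?thesis by (intro exI[of _ "2 * (\<Sum>a\<in>S. f a) + 2"]) auto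
qed

lemma connected_graph_no_isolated:
  assumes "simple_graph V E" "connected_graph V E" "E x y" "a \<in> V"
  shows "\<exists>b. E a b"
proof -
  have "x \<in> V" using assms(1,3) unfolding simple_graph_def by blast
  then obtain n where "walk E n a x" using assms(2,4) unfolding connected_graph_def by blast
  then show ?thesis using assms(3) by (cases rule: walk.cases) auto
qed

locale walk_graph =
  fixes V :: "'a set" and E :: "'a \<Rightarrow> 'a \<Rightarrow> bool"
  assumes simple: "simple_graph V E" and no_isolated: "\<And>a. a \<in> V \<Longrightarrow> \<exists>b. E a b"
begin

lemma finite_V: "finite V"
  using simple by (simp add: simple_graph_def)

lemma edge_in_V: "E x y \<Longrightarrow> x \<in> V \<and> y \<in> V"
  using simple by (simp add: simple_graph_def)

lemma edge_sym: "E x y \<Longrightarrow> E y x"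
  using simple by (simp add: simple_graph_def)

lemma edge_irrefl: "\<not> E x x"
  using simple by (simp add: simple_graph_def)

lemma deg_pos: "a \<in> V \<Longrightarrow> 0 < deg V E a"
  unfolding deg_def using no_isolated edge_in_V finite_V
  by (metis (no_types, lifting) card_gt_0_iff empty_iff mem_Collect_eq rev_finite_subset subsetI)

lemma deg_le_card: "deg V E a \<le> card V"
  unfolding deg_def using finite_V by (intro card_mono) auto

abbreviation P :: "real \<Rightarrow> ('a \<Rightarrow> real) \<Rightarrow> 'a \<Rightarrow> real" where
  "P \<equiv> walk_step V E"

lemma walk_step_linear: "P g (\<lambda>w. a * x w + b * y w) = (\<lambda>w. a * P g x w + b * P g y w)"
  unfolding walk_step_def
  by (rule ext) (simp add: distrib_left sum.distrib sum_distrib_left mult.left_commute add_ac)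

lemma funpow_walk_step_linear:
  "(P g ^^ n) (\<lambda>w. a * x w + b * y w) = (\<lambda>w. a * (P g ^^ n) x w + b * (P g ^^ n) y w)"
  by (induction n) (auto simp: walk_step_linear)

lemma funpow_walk_step_diff: "(P g ^^ n) (\<lambda>w. x w - y w) = (\<lambda>w. (P g ^^ n) x w - (P g ^^ n) y w)"
  using funpow_walk_step_linear[where a = 1 and b = "-1"] by simp

lemma walk_step_ge_lazy: "0 \<le> g \<Longrightarrow> g \<le> 1 \<Longrightarrow> (\<And>w. 0 \<le> x w) \<Longrightarrow> g * x w \<le> P g x w"
  unfolding walk_step_def by (auto intro!: sum_nonneg)

lemma walk_step_nonneg: "0 \<le> g \<Longrightarrow> g \<le> 1 \<Longrightarrow> (\<And>w. 0 \<le> x w) \<Longrightarrow> 0 \<le> P g x w"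
  by (meson mult_nonneg_nonneg order_trans walk_step_ge_lazy)

lemma funpow_walk_step_nonneg: "0 \<le> g \<Longrightarrow> g \<le> 1 \<Longrightarrow> (\<And>w. 0 \<le> x w) \<Longrightarrow> 0 \<le> (P g ^^ n) x w"
  by (induction n arbitrary: w) (simp_all add: walk_step_nonneg)

lemma walk_step_1: "P 1 x = x"
  unfolding walk_step_def by simp

lemma sum_walk_step: "(\<Sum>w\<in>V. P g x w) = (\<Sum>w\<in>V. x w)"
proof -
  have "(\<Sum>w\<in>V. \<Sum>t\<in>{t\<in>V. E t w}. (1 - g) / deg V E t * x t)
      = (\<Sum>t\<in>V. \<Sum>w\<in>{w\<in>V. E t w}. (1 - g) / deg V E t * x t)"
    using sum.swap_restrict[OF finite_V finite_V, of "\<lambda>w t. (1 - g) / deg V E t * x t" "\<lambda>w t. E t w"]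
    by simp
  also have "\<dots> = (\<Sum>t\<in>V. (1 - g) * x t)"
    by (rule sum.cong) (use deg_pos in \<open>simp_all add: deg_def[symmetric]\<close>)
  finally show ?thesis
    unfolding walk_step_def by (simp add: sum.distrib sum_distrib_left algebra_simps sum_subtractf)
qed

lemma sum_funpow_walk_step: "(\<Sum>w\<in>V. (P g ^^ n) x w) = (\<Sum>w\<in>V. x w)"
  by (induction n) (simp_all add: sum_walk_step)

lemma walk_dist_Suc: "walk_dist V E g u (Suc n) = P g (walk_dist V E g u n)"
  unfolding walk_dist_def by simp

lemma walk_dist_nonneg: "0 \<le> g \<Longrightarrow> g \<le> 1 \<Longrightarrow> 0 \<le> walk_dist V E g u n w"
  unfolding walk_dist_def by (rule funpow_walk_step_nonneg) auto

lemma sum_walk_dist: "u \<in> V \<Longrightarrow> (\<Sum>w\<in>V. walk_dist V E g u n w) = 1"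
  unfolding walk_dist_def sum_funpow_walk_step using finite_V by simp

lemma walk_dist_1: "walk_dist V E 1 u n = (\<lambda>w. if w = u then 1 else 0)"
  unfolding walk_dist_def by (induction n) (simp_all add: walk_step_1)

definition distribution :: "('a \<Rightarrow> real) \<Rightarrow> bool" where
  "distribution \<mu> \<longleftrightarrow> (\<forall>w\<in>V. 0 \<le> \<mu> w) \<and> (\<Sum>w\<in>V. \<mu> w) = 1"

lemma distribution_walk_dist: "0 \<le> g \<Longrightarrow> g \<le> 1 \<Longrightarrow> u \<in> V \<Longrightarrow> distribution (walk_dist V E g u n)"
  unfolding distribution_def by (simp add: walk_dist_nonneg sum_walk_dist)

definition stationary :: "'a \<Rightarrow> real" where
  "stationary w = deg V E w / (\<Sum>t\<in>V. deg V E t)"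

lemma walk_step_stationary: "P g stationary = stationary"
proof
  fix w
  have "{t\<in>V. E t w} = {t\<in>V. E w t}" using edge_sym by blast
  then have "(\<Sum>t\<in>{t\<in>V. E t w}. (1 - g) / deg V E t * stationary t)
      = deg V E w * ((1 - g) / (\<Sum>t\<in>V. deg V E t))"
    using deg_pos by (simp add: stationary_def deg_def)
  then show "P g stationary w = stationary w"
    unfolding walk_step_def by (simp add: stationary_def algebra_simps add_divide_distrib[symmetric])
qed

lemma funpow_walk_step_stationary: "(P g ^^ n) stationary = stationary"
  by (induction n) (simp_all add: walk_step_stationary)

lemma sum_stationary: "V \<noteq> {} \<Longrightarrow> (\<Sum>w\<in>V. stationary w) = 1"
proof -
  assume "V \<noteq> {}"
  then have "0 < (\<Sum>t\<in>V. real (deg V E t))"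
    using deg_pos finite_V by (intro sum_pos) auto
  then show ?thesis unfolding stationary_def by (simp add: sum_divide_distrib[symmetric])
qed

definition l1 :: "('a \<Rightarrow> real) \<Rightarrow> real" where
  "l1 x = (\<Sum>w\<in>V. \<bar>x w\<bar>)"

lemma l1_nonneg: "0 \<le> l1 x"
  unfolding l1_def by (simp add: sum_nonneg)

lemma l1_diff_triangle: "l1 (\<lambda>w. x w - y w) \<le> l1 (\<lambda>w. x w - z w) + l1 (\<lambda>w. y w - z w)"
  unfolding l1_def sum.distrib[symmetric] by (rule sum_mono) linarith

lemma l1_diff_tendsto_zero:
  assumes "(\<lambda>n. l1 (\<lambda>w. x n w - z w)) \<longlonglongrightarrow> 0" "(\<lambda>n. l1 (\<lambda>w. y n w - z w)) \<longlonglongrightarrow> 0"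
  shows "(\<lambda>n. l1 (\<lambda>w. x n w - y n w)) \<longlonglongrightarrow> 0"
  by (rule tendsto_sandwich[OF _ _ tendsto_const tendsto_add_zero[OF assms]])
    (simp_all add: l1_nonneg l1_diff_triangle)

lemma l1_funpow_walk_step_le:
  assumes "0 \<le> g" "g \<le> 1"
  shows "l1 ((P g ^^ n) x) \<le> l1 x"
proof -
  have "\<bar>(P g ^^ n) x w\<bar> \<le> (P g ^^ n) (\<lambda>w. \<bar>x w\<bar>) w" for w
  proof -
    have "0 \<le> (P g ^^ n) (\<lambda>w. 1 * \<bar>x w\<bar> + (-1) * x w) w"
      by (rule funpow_walk_step_nonneg[OF assms]) simp
    moreover have "0 \<le> (P g ^^ n) (\<lambda>w. 1 * \<bar>x w\<bar> + 1 * x w) w"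
      by (rule funpow_walk_step_nonneg[OF assms]) simp
    ultimately show ?thesis unfolding funpow_walk_step_linear by simp
  qed
  then have "l1 ((P g ^^ n) x) \<le> (\<Sum>w\<in>V. (P g ^^ n) (\<lambda>w. \<bar>x w\<bar>) w)"
    unfolding l1_def by (rule sum_mono)
  then show ?thesis unfolding sum_funpow_walk_step l1_def .
qed

lemma walk_step_at_le:
  assumes g: "0 \<le> g" "g \<le> 1" and x: "distribution x" and v: "v \<in> V"
  shows "P g x v \<le> g * x v + (1 - g) * (1 - x v)"
proof -
  have "(\<Sum>t\<in>{t\<in>V. E t v}. (1 - g) / deg V E t * x t) \<le> (\<Sum>t\<in>{t\<in>V. E t v}. (1 - g) * x t)"
  proof (rule sum_mono)
    fix t assume t: "t \<in> {t\<in>V. E t v}"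
    then have "1 \<le> real (deg V E t)" using deg_pos[of t] by simp
    then have "(1 - g) / deg V E t \<le> (1 - g) / 1"
      using g by (intro divide_left_mono) auto
    moreover have "0 \<le> x t" using x t unfolding distribution_def by blast
    ultimately show "(1 - g) / deg V E t * x t \<le> (1 - g) * x t"
      by (metis div_by_1 mult_right_mono)
  qed
  also have "\<dots> \<le> (\<Sum>t\<in>V - {v}. (1 - g) * x t)"
    using finite_V edge_irrefl x g unfolding distribution_def by (intro sum_mono2) auto
  also have "\<dots> = (1 - g) * (1 - x v)"
    using x v finite_V unfolding distribution_def by (simp add: sum_distrib_left[symmetric] sum_diff1)
  finally show ?thesis unfolding walk_step_def by simp
qed

lemma walk_step_0_switches_side:
  assumes A: "\<And>x y. E x y \<Longrightarrow> x \<in> A \<longleftrightarrow> y \<notin> A"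
    and x: "\<forall>w\<in>V. (w \<in> A) \<noteq> s \<longrightarrow> x w = 0"
  shows "\<forall>w\<in>V. (w \<in> A) \<noteq> (\<not> s) \<longrightarrow> P 0 x w = 0"
proof (intro ballI impI)
  fix w assume w: "w \<in> V" "(w \<in> A) \<noteq> (\<not> s)"
  have "(\<Sum>t\<in>{t\<in>V. E t w}. (1 - 0) / deg V E t * x t) = 0"
    using A[of _ w] w x by (intro sum.neutral) auto
  then show "P 0 x w = 0" unfolding walk_step_def by simp
qed

lemma funpow_walk_step_0_side:
  assumes A: "\<And>x y. E x y \<Longrightarrow> x \<in> A \<longleftrightarrow> y \<notin> A"
    and x: "\<forall>w\<in>V. (w \<in> A) \<noteq> s \<longrightarrow> x w = 0"
  shows "\<forall>w\<in>V. (w \<in> A) \<noteq> (s = even n) \<longrightarrow> (P 0 ^^ n) x w = 0"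
proof (induction n)
  case (Suc n)
  have "(\<not> (s = even n)) = (s = even (Suc n))" by simp
  then show ?case using walk_step_0_switches_side[OF A Suc] by simp
qed (use x in simp)

lemma sum_bipartition_side:
  assumes "A \<subseteq> V" and x: "\<forall>w\<in>V. (w \<in> A) \<noteq> s \<longrightarrow> x w = 0"
  shows "(\<Sum>w\<in>A. x w) = (if s then \<Sum>w\<in>V. x w else 0)"
  using assms finite_V by (auto intro!: sum.neutral sum.mono_neutral_left)

lemma sum_walk_dist_0_side:
  assumes A: "\<And>x y. E x y \<Longrightarrow> x \<in> A \<longleftrightarrow> y \<notin> A" "A \<subseteq> V" and u: "u \<in> V"
  shows "(\<Sum>w\<in>A. walk_dist V E 0 u n w) = of_bool ((u \<in> A) = even n)"
proof -
  have "\<forall>w\<in>V. (w \<in> A) \<noteq> ((u \<in> A) = even n) \<longrightarrow> walk_dist V E 0 u n w = 0"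
    unfolding walk_dist_def by (rule funpow_walk_step_0_side[OF A(1)]) auto
  from sum_bipartition_side[OF A(2) this] show ?thesis using sum_walk_dist[OF u] by simp
qed

section \<open>Doeblin contraction\<close>

definition lazy_edge :: "real \<Rightarrow> 'a \<Rightarrow> 'a \<Rightarrow> bool" where
  "lazy_edge g x y \<longleftrightarrow> E x y \<or> (x = y \<and> 0 < g)"

lemma walk_lazy_edge: "walk E n a b \<Longrightarrow> walk (lazy_edge g) n a b"
  by (erule walk_mono) (simp add: lazy_edge_def)

text \<open>A lower bound for the probability of each single \<open>lazy_edge\<close> move. For g = 0
  the walk never stays put, so only the bound \<open>1 / |V|\<close> on edge moves is needed.\<close>

definition min_step_prob :: "real \<Rightarrow> real" where
  "min_step_prob g = (if g = 0 then 1 / card V else min g ((1 - g) / card V))"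

lemma min_step_prob_nonneg: "0 \<le> g \<Longrightarrow> g < 1 \<Longrightarrow> 0 \<le> min_step_prob g"
  unfolding min_step_prob_def by auto

lemma min_step_prob_pos: "V \<noteq> {} \<Longrightarrow> 0 \<le> g \<Longrightarrow> g < 1 \<Longrightarrow> 0 < min_step_prob g"
  unfolding min_step_prob_def using finite_V by (auto simp: card_gt_0_iff)

lemma min_step_prob_le_1: "0 \<le> g \<Longrightarrow> g < 1 \<Longrightarrow> min_step_prob g \<le> 1"
  unfolding min_step_prob_def by (auto simp: divide_le_eq min_le_iff_disj)

lemma walk_step_ge_lazy_edge:
  assumes g: "0 \<le> g" "g < 1" and x: "\<And>w. 0 \<le> x w" and edge: "lazy_edge g a y"
  shows "min_step_prob g * x a \<le> P g x y"
proof (cases "E a y")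
  case True
  then have a: "a \<in> V" using edge_in_V by blast
  have "min_step_prob g \<le> (1 - g) / card V"
    unfolding min_step_prob_def by auto
  also have "\<dots> \<le> (1 - g) / deg V E a"
    using deg_pos[OF a] deg_le_card[of a] g by (intro divide_left_mono) auto
  finally have "min_step_prob g * x a \<le> (1 - g) / deg V E a * x a"
    using x by (rule mult_right_mono)
  also have "\<dots> \<le> (\<Sum>t\<in>{t\<in>V. E t y}. (1 - g) / deg V E t * x t)"
    using True a g x finite_V by (intro member_le_sum) auto
  also have "\<dots> \<le> P g x y"
    unfolding walk_step_def using g x by simp
  finally show ?thesis .
next
  case False
  then have "a = y" "0 < g" using edge unfolding lazy_edge_def by auto
  then have "min_step_prob g * x a \<le> g * x y"
    using x unfolding min_step_prob_def by (auto intro: mult_right_mono)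
  also have "\<dots> \<le> P g x y" using g x by (intro walk_step_ge_lazy) auto
  finally show ?thesis .
qed

lemma funpow_walk_step_ge_walk:
  assumes "walk (lazy_edge g) n a b" and g: "0 \<le> g" "g < 1" and x: "\<And>w. 0 \<le> x w"
  shows "min_step_prob g ^ n * x a \<le> (P g ^^ n) x b"
  using assms(1) x
proof (induction arbitrary: x rule: walk.induct)
  case (walkS a y n b)
  have "min_step_prob g * x a \<le> P g x y"
    using walkS.prems walkS.hyps(1) by (rule walk_step_ge_lazy_edge[OF g])
  then have "min_step_prob g ^ n * (min_step_prob g * x a) \<le> min_step_prob g ^ n * P g x y"
    using min_step_prob_nonneg[OF g] by (simp add: mult_left_mono)
  then have "min_step_prob g ^ Suc n * x a \<le> min_step_prob g ^ n * P g x y"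
    by (simp add: mult_ac)
  also have "\<dots> \<le> (P g ^^ n) (P g x) b"
    using g walkS.prems by (intro walkS.IH walk_step_nonneg) auto
  finally show ?case by (simp only: funpow_Suc_right comp_apply)
qed simp

lemma funpow_walk_step_minorization:
  assumes g: "0 \<le> g" "g < 1" and S: "S \<subseteq> V"
    and walks: "\<And>a. a \<in> S \<Longrightarrow> walk (lazy_edge g) m a b"
    and f: "\<And>w. 0 \<le> f w" "\<And>w. w \<in> V - S \<Longrightarrow> f w = 0"
  shows "min_step_prob g ^ m / card V * (\<Sum>w\<in>V. f w) \<le> (P g ^^ m) f b"
proof -
  have Pf: "0 \<le> (P g ^^ m) f b" using g f by (intro funpow_walk_step_nonneg) auto
  have "min_step_prob g ^ m * (\<Sum>w\<in>V. f w) = (\<Sum>a\<in>S. min_step_prob g ^ m * f a)"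
    using S f finite_V by (simp add: sum_distrib_left sum.mono_neutral_right)
  also have "\<dots> \<le> (\<Sum>a\<in>S. (P g ^^ m) f b)"
    using walks g f by (intro sum_mono funpow_walk_step_ge_walk) auto
  also have "\<dots> \<le> card V * (P g ^^ m) f b"
    using card_mono[OF finite_V S] Pf by (simp add: mult_right_mono)
  finally show ?thesis
    using Pf by (cases "card V = 0") (simp_all add: field_simps)
qed

lemma l1_funpow_walk_step_contraction:
  assumes g: "0 \<le> g" "g < 1" and S: "S \<subseteq> V" and b: "b \<in> V"
    and walks: "\<And>a. a \<in> S \<Longrightarrow> walk (lazy_edge g) m a b"
    and supp: "\<And>w. w \<in> V - S \<Longrightarrow> x w = 0" and mass: "(\<Sum>w\<in>V. x w) = 0"
  shows "l1 ((P g ^^ m) x) \<le> (1 - min_step_prob g ^ m / card V) * l1 x"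
proof -
  define d where "d = min_step_prob g ^ m / card V"
  define L where "L = P g ^^ m"
  define xp where "xp = (\<lambda>w. max (x w) 0)"
  define xn where "xn = (\<lambda>w. max (- x w) 0)"
  define h where "h = (\<Sum>w\<in>V. xp w)"
  have x_split: "x = (\<lambda>w. 1 * xp w + (-1) * xn w)" unfolding xp_def xn_def by auto
  have Lx: "L x w = L xp w - L xn w" for w
    unfolding L_def by (subst x_split, subst funpow_walk_step_linear) simp
  have L0: "0 \<le> L xp w" "0 \<le> L xn w" for w
    unfolding L_def xp_def xn_def using g by (auto intro!: funpow_walk_step_nonneg)
  have "h - (\<Sum>w\<in>V. xn w) = (\<Sum>w\<in>V. x w)"
    unfolding h_def sum_subtractf[symmetric] by (rule sum.cong) (auto simp: xp_def xn_def)
  then have hn: "(\<Sum>w\<in>V. xn w) = h" using mass by simp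
  have l1x: "l1 x = 2 * h"
  proof -
    have "l1 x = h + (\<Sum>w\<in>V. xn w)"
      unfolding h_def l1_def sum.distrib[symmetric] by (rule sum.cong) (auto simp: xp_def xn_def)
    then show ?thesis using hn by simp
  qed
  \<comment> \<open>the positive and the negative part both put mass \<open>d * h\<close> on b, where they cancel\<close>
  have "d * h \<le> L xp b"
    unfolding d_def L_def h_def
    by (rule funpow_walk_step_minorization[OF g S walks]) (auto simp: xp_def supp)
  moreover have "d * h \<le> L xn b"
    unfolding d_def L_def hn[symmetric]
    by (rule funpow_walk_step_minorization[OF g S walks]) (auto simp: xn_def supp)
  ultimately have "\<bar>L x w\<bar> \<le> L xp w + L xn w - (if w = b then 2 * d * h else 0)" for w
    unfolding Lx using L0[of w] by auto
  then have "l1 (L x) \<le> (\<Sum>w\<in>V. L xp w + L xn w - (if w = b then 2 * d * h else 0))"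
    unfolding l1_def by (rule sum_mono)
  also have "\<dots> = (\<Sum>w\<in>V. L xp w) + (\<Sum>w\<in>V. L xn w) - 2 * d * h"
    using b finite_V by (simp add: sum.distrib sum_subtractf)
  also have "\<dots> = (1 - d) * l1 x"
    unfolding L_def sum_funpow_walk_step hn[unfolded L_def] l1x by (simp add: h_def algebra_simps)
  finally show ?thesis unfolding L_def d_def .
qed

lemma l1_funpow_walk_step_tendsto_zero:
  assumes g: "0 \<le> g" "g < 1" and S: "S \<subseteq> V" and b: "b \<in> V" and m: "0 < m"
    and walks: "\<And>a. a \<in> S \<Longrightarrow> walk (lazy_edge g) m a b"
    and invariant: "\<And>y w. \<forall>w\<in>V - S. y w = 0 \<Longrightarrow> w \<in> V - S \<Longrightarrow> (P g ^^ m) y w = 0"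
    and supp: "\<And>w. w \<in> V - S \<Longrightarrow> x w = 0" and mass: "(\<Sum>w\<in>V. x w) = 0"
  shows "(\<lambda>n. l1 ((P g ^^ n) x)) \<longlonglongrightarrow> 0"
proof -
  define d where "d = min_step_prob g ^ m / card V"
  have card: "1 \<le> real (card V)" using b finite_V by (auto simp: Suc_le_eq card_gt_0_iff)
  have "0 < min_step_prob g" using b g by (intro min_step_prob_pos) auto
  then have "0 < min_step_prob g ^ m" "min_step_prob g ^ m \<le> 1"
    using min_step_prob_le_1[OF g] by (simp_all add: power_le_one)
  then have d: "0 < d" "d \<le> 1"
    using card unfolding d_def by (simp_all add: divide_le_eq)
  have supp_iter: "\<forall>w\<in>V - S. (P g ^^ (m * j)) x w = 0" for j
    by (induction j) (simp_all add: supp invariant funpow_add)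
  have decay: "l1 ((P g ^^ (m * j)) x) \<le> (1 - d) ^ j * l1 x" for j
  proof (induction j)
    case (Suc j)
    have "l1 ((P g ^^ (m * Suc j)) x) = l1 ((P g ^^ m) ((P g ^^ (m * j)) x))"
      by (simp add: funpow_add)
    also have "\<dots> \<le> (1 - d) * l1 ((P g ^^ (m * j)) x)"
      unfolding d_def using supp_iter
      by (intro l1_funpow_walk_step_contraction[OF g S b walks]) (simp_all add: sum_funpow_walk_step mass)
    also have "\<dots> \<le> (1 - d) * ((1 - d) ^ j * l1 x)"
      using Suc d by (intro mult_left_mono) auto
    finally show ?case by simp
  qed simp
  have bound: "l1 ((P g ^^ n) x) \<le> (1 - d) ^ (n div m) * l1 x" for n
  proof -
    have "(P g ^^ n) x = (P g ^^ (n mod m)) ((P g ^^ (m * (n div m))) x)"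
      by (metis comp_apply funpow_add mod_mult_div_eq)
    then have "l1 ((P g ^^ n) x) \<le> l1 ((P g ^^ (m * (n div m))) x)"
      using l1_funpow_walk_step_le g by simp
    then show ?thesis using decay by (rule order_trans)
  qed
  have "(\<lambda>n. (1 - d) ^ (n div m)) \<longlonglongrightarrow> 0"
    using filterlim_compose[OF LIMSEQ_power_zero[of "1 - d"] filterlim_at_top_div_const_nat[OF m]] d
    by simp
  then have lim: "(\<lambda>n. (1 - d) ^ (n div m) * l1 x) \<longlonglongrightarrow> 0"
    by (rule tendsto_mult_left_zero)
  show ?thesis
    by (rule tendsto_sandwich[OF _ _ tendsto_const lim]) (auto simp: l1_nonneg bound)
qed

section \<open>Bounds on the Wasserstein distance\<close>

definition transport_cost :: "('a \<Rightarrow> 'a \<Rightarrow> real) \<Rightarrow> real" where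
  "transport_cost T = (\<Sum>a\<in>V. \<Sum>b\<in>V. real (gdist E a b) * T a b)"

lemma transport_cost_nonneg: "transport_plan V \<mu> \<nu> T \<Longrightarrow> 0 \<le> transport_cost T"
  unfolding transport_cost_def transport_plan_def by (auto intro!: sum_nonneg)

lemma wasserstein_le_transport_cost:
  "transport_plan V \<mu> \<nu> T \<Longrightarrow> wasserstein V E \<mu> \<nu> \<le> transport_cost T"
  unfolding wasserstein_def transport_cost_def[symmetric]
  by (rule cInf_lower) (auto intro!: bdd_belowI[of _ 0] transport_cost_nonneg)

lemma transport_plan_product:
  "distribution \<mu> \<Longrightarrow> distribution \<nu> \<Longrightarrow> transport_plan V \<mu> \<nu> (\<lambda>a b. \<mu> a * \<nu> b)"
  unfolding transport_plan_def distribution_def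
  by (auto simp: sum_distrib_left[symmetric] sum_distrib_right[symmetric])

lemma wasserstein_greatest:
  assumes "distribution \<mu>" "distribution \<nu>"
    and "\<And>T. transport_plan V \<mu> \<nu> T \<Longrightarrow> c \<le> transport_cost T"
  shows "c \<le> wasserstein V E \<mu> \<nu>"
  unfolding wasserstein_def transport_cost_def[symmetric]
  using transport_plan_product[OF assms(1,2)] assms(3) by (intro cInf_greatest) auto

lemma wasserstein_nonneg: "distribution \<mu> \<Longrightarrow> distribution \<nu> \<Longrightarrow> 0 \<le> wasserstein V E \<mu> \<nu>"
  by (rule wasserstein_greatest) (auto intro: transport_cost_nonneg)

definition excess :: "('a \<Rightarrow> real) \<Rightarrow> ('a \<Rightarrow> real) \<Rightarrow> 'a \<Rightarrow> real" where
  "excess \<mu> \<nu> a = max (\<mu> a - \<nu> a) 0"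

definition coupling :: "('a \<Rightarrow> real) \<Rightarrow> ('a \<Rightarrow> real) \<Rightarrow> 'a \<Rightarrow> 'a \<Rightarrow> real" where
  "coupling \<mu> \<nu> a b = (if a = b then min (\<mu> a) (\<nu> a) else 0)
     + excess \<mu> \<nu> a * excess \<nu> \<mu> b / (\<Sum>w\<in>V. excess \<mu> \<nu> w)"

lemma excess_nonneg: "0 \<le> excess \<mu> \<nu> a"
  unfolding excess_def by simp

lemma sum_excess_swap:
  "(\<Sum>w\<in>V. \<mu> w) = (\<Sum>w\<in>V. \<nu> w) \<Longrightarrow> (\<Sum>w\<in>V. excess \<nu> \<mu> w) = (\<Sum>w\<in>V. excess \<mu> \<nu> w)"
proof -
  assume mass: "(\<Sum>w\<in>V. \<mu> w) = (\<Sum>w\<in>V. \<nu> w)"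
  have "excess \<nu> \<mu> w = excess \<mu> \<nu> w + (\<nu> w - \<mu> w)" for w
    unfolding excess_def by auto
  then show ?thesis using mass by (simp add: sum.distrib sum_subtractf)
qed

lemma transport_plan_coupling:
  assumes "\<forall>w\<in>V. 0 \<le> \<mu> w" "\<forall>w\<in>V. 0 \<le> \<nu> w" and mass: "(\<Sum>w\<in>V. \<mu> w) = (\<Sum>w\<in>V. \<nu> w)"
  shows "transport_plan V \<mu> \<nu> (coupling \<mu> \<nu>)"
proof -
  define r where "r = (\<Sum>w\<in>V. excess \<mu> \<nu> w)"
  have r: "0 \<le> r" unfolding r_def by (simp add: sum_nonneg excess_nonneg)
  have "excess \<mu> \<nu> a = 0" "excess \<nu> \<mu> a = 0" if "r = 0" "a \<in> V" for a
    using that sum_excess_swap[OF mass] finite_V unfolding r_def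
    by (simp_all add: sum_nonneg_eq_0_iff excess_nonneg)
  then have "excess \<mu> \<nu> a * r / r = excess \<mu> \<nu> a" "r * excess \<nu> \<mu> a / r = excess \<nu> \<mu> a"
    if "a \<in> V" for a
    using that by (cases "r = 0"; simp)+
  moreover have "min (\<mu> a) (\<nu> a) + excess \<mu> \<nu> a = \<mu> a" "min (\<mu> a) (\<nu> a) + excess \<nu> \<mu> a = \<nu> a" for a
    unfolding excess_def by auto
  ultimately show ?thesis
    unfolding transport_plan_def coupling_def r_def[symmetric] using assms(1,2) r finite_V
    by (auto simp: sum.distrib sum_distrib_left[symmetric] sum_distrib_right[symmetric]
      sum_divide_distrib[symmetric] excess_nonneg sum_excess_swap[OF mass] r_def[symmetric])
qed

lemma wasserstein_le_l1:
  assumes "\<forall>w\<in>V. 0 \<le> \<mu> w" "\<forall>w\<in>V. 0 \<le> \<nu> w" and mass: "(\<Sum>w\<in>V. \<mu> w) = (\<Sum>w\<in>V. \<nu> w)"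
    and D: "\<And>a b. a \<in> V \<Longrightarrow> b \<in> V \<Longrightarrow> gdist E a b \<le> D"
  shows "wasserstein V E \<mu> \<nu> \<le> real D * l1 (\<lambda>w. \<mu> w - \<nu> w)"
proof -
  define r where "r = (\<Sum>w\<in>V. excess \<mu> \<nu> w)"
  have r: "0 \<le> r" unfolding r_def by (simp add: sum_nonneg excess_nonneg)
  have "wasserstein V E \<mu> \<nu> \<le> transport_cost (coupling \<mu> \<nu>)"
    using transport_plan_coupling[OF assms(1-3)] by (rule wasserstein_le_transport_cost)
  also have "\<dots> \<le> (\<Sum>a\<in>V. \<Sum>b\<in>V. real D / r * (excess \<mu> \<nu> a * excess \<nu> \<mu> b))"
    unfolding transport_cost_def
  proof (intro sum_mono)
    fix a b assume ab: "a \<in> V" "b \<in> V"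
    have "real (gdist E a b) * (excess \<mu> \<nu> a * excess \<nu> \<mu> b / r) \<le> real D * (excess \<mu> \<nu> a * excess \<nu> \<mu> b / r)"
      using D[OF ab] r by (intro mult_right_mono) (auto simp: excess_nonneg)
    then show "real (gdist E a b) * coupling \<mu> \<nu> a b \<le> real D / r * (excess \<mu> \<nu> a * excess \<nu> \<mu> b)"
      unfolding coupling_def r_def[symmetric] by (cases "a = b") (simp_all add: gdist_refl)
  qed
  also have "\<dots> = real D / r * (\<Sum>a\<in>V. excess \<mu> \<nu> a * (\<Sum>b\<in>V. excess \<nu> \<mu> b))"
    by (simp only: sum_distrib_left)
  also have "\<dots> = real D / r * (r * r)"
    unfolding sum_excess_swap[OF mass] by (simp add: sum_distrib_right[symmetric] r_def)
  also have "\<dots> \<le> real D * r"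
    by (cases "r = 0") simp_all
  also have "\<dots> \<le> real D * l1 (\<lambda>w. \<mu> w - \<nu> w)"
    unfolding r_def l1_def excess_def by (intro mult_left_mono sum_mono) auto
  finally show ?thesis .
qed

lemma lipschitz_sum_le_wasserstein:
  fixes f :: "'a \<Rightarrow> real"
  assumes "distribution \<mu>" "distribution \<nu>"
    and lipschitz: "\<And>a b. a \<in> V \<Longrightarrow> b \<in> V \<Longrightarrow> \<bar>f a - f b\<bar> \<le> gdist E a b"
  shows "\<bar>(\<Sum>w\<in>V. f w * \<mu> w) - (\<Sum>w\<in>V. f w * \<nu> w)\<bar> \<le> wasserstein V E \<mu> \<nu>"
proof (rule wasserstein_greatest[OF assms(1,2)])
  fix T assume T: "transport_plan V \<mu> \<nu> T"
  have "(\<Sum>a\<in>V. f a * \<mu> a) = (\<Sum>a\<in>V. \<Sum>b\<in>V. f a * T a b)"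
    using T unfolding transport_plan_def by (intro sum.cong) (simp_all add: sum_distrib_left[symmetric])
  moreover have "(\<Sum>b\<in>V. f b * \<nu> b) = (\<Sum>b\<in>V. \<Sum>a\<in>V. f b * T a b)"
    using T unfolding transport_plan_def by (intro sum.cong) (simp_all add: sum_distrib_left[symmetric])
  moreover have "(\<Sum>b\<in>V. \<Sum>a\<in>V. f b * T a b) = (\<Sum>a\<in>V. \<Sum>b\<in>V. f b * T a b)"
    by (rule sum.swap)
  ultimately have "\<bar>(\<Sum>w\<in>V. f w * \<mu> w) - (\<Sum>w\<in>V. f w * \<nu> w)\<bar>
      = \<bar>\<Sum>a\<in>V. \<Sum>b\<in>V. (f a - f b) * T a b\<bar>"
    by (simp add: sum_subtractf left_diff_distrib)
  also have "\<dots> \<le> (\<Sum>a\<in>V. \<Sum>b\<in>V. \<bar>(f a - f b) * T a b\<bar>)"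
    by (rule order_trans[OF sum_abs sum_mono]) (rule sum_abs)
  also have "\<dots> = (\<Sum>a\<in>V. \<Sum>b\<in>V. \<bar>f a - f b\<bar> * T a b)"
    using T unfolding transport_plan_def by (intro sum.cong) (simp_all add: abs_mult)
  also have "\<dots> \<le> transport_cost T"
    using T lipschitz unfolding transport_plan_def transport_cost_def
    by (intro sum_mono mult_right_mono) auto
  finally show "\<bar>(\<Sum>w\<in>V. f w * \<mu> w) - (\<Sum>w\<in>V. f w * \<nu> w)\<bar> \<le> transport_cost T" .
qed

lemma wasserstein_tendsto_zero_if_l1:
  assumes "\<And>n. distribution (\<mu> n)" "\<And>n. distribution (\<nu> n)"
    and "(\<lambda>n. l1 (\<lambda>w. \<mu> n w - \<nu> n w)) \<longlonglongrightarrow> 0"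
  shows "(\<lambda>n. wasserstein V E (\<mu> n) (\<nu> n)) \<longlonglongrightarrow> 0"
proof -
  have "finite ((\<lambda>(a, b). gdist E a b) ` (V \<times> V))" using finite_V by simp
  then obtain D where "\<forall>d\<in>(\<lambda>(a, b). gdist E a b) ` (V \<times> V). d \<le> D"
    unfolding finite_nat_set_iff_bounded_le by blast
  then have D: "\<And>a b. a \<in> V \<Longrightarrow> b \<in> V \<Longrightarrow> gdist E a b \<le> D" by auto
  have upper: "wasserstein V E (\<mu> n) (\<nu> n) \<le> real D * l1 (\<lambda>w. \<mu> n w - \<nu> n w)" for n
    using assms(1,2)[of n] D unfolding distribution_def by (intro wasserstein_le_l1) auto
  have lower: "0 \<le> wasserstein V E (\<mu> n) (\<nu> n)" for n
    using assms(1,2) by (rule wasserstein_nonneg)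
  have lim: "(\<lambda>n. real D * l1 (\<lambda>w. \<mu> n w - \<nu> n w)) \<longlonglongrightarrow> 0"
    using tendsto_mult_right_zero[OF assms(3)] .
  show ?thesis
    by (rule tendsto_sandwich[OF _ _ tendsto_const lim]) (simp_all add: lower upper)
qed

end

lemma not_tendsto_zero_if_ge:
  assumes "\<And>n. c \<le> X n" "0 < c"
  shows "\<not> X \<longlonglongrightarrow> (0 :: real)"
proof
  assume "X \<longlonglongrightarrow> 0"
  then have "c \<le> 0" by (rule LIMSEQ_le_const) (use assms(1) in auto)
  then show False using assms(2) by simp
qed

locale connected_walk_graph = walk_graph +
  assumes connected: "connected_graph V E"
begin

lemma walk_exists: "a \<in> V \<Longrightarrow> b \<in> V \<Longrightarrow> \<exists>n. walk E n a b"
  using connected unfolding connected_graph_def by blast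

lemma gdist_ge_1:
  assumes "a \<in> V" "b \<in> V" "a \<noteq> b"
  shows "1 \<le> gdist E a b"
proof -
  have "walk E (gdist E a b) a b"
    unfolding gdist_def using walk_exists[OF assms(1,2)] by (rule LeastI_ex)
  then show ?thesis using assms(3) walk_0_eq by (metis less_one not_le)
qed

lemma sum_diff_le_wasserstein:
  assumes "distribution \<mu>" "distribution \<nu>" "S \<subseteq> V"
  shows "\<bar>(\<Sum>w\<in>S. \<mu> w) - (\<Sum>w\<in>S. \<nu> w)\<bar> \<le> wasserstein V E \<mu> \<nu>"
proof -
  have "\<bar>of_bool (a \<in> S) - of_bool (b \<in> S) :: real\<bar> \<le> gdist E a b" if "a \<in> V" "b \<in> V" for a b
  proof (cases "a = b")
    case False
    have "\<bar>of_bool (a \<in> S) - of_bool (b \<in> S) :: real\<bar> \<le> 1"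
      by (cases "a \<in> S"; cases "b \<in> S") simp_all
    then show ?thesis using gdist_ge_1[OF that False] by linarith
  qed simp
  then have "\<bar>(\<Sum>w\<in>V. of_bool (w \<in> S) * \<mu> w) - (\<Sum>w\<in>V. of_bool (w \<in> S) * \<nu> w)\<bar>
      \<le> wasserstein V E \<mu> \<nu>"
    by (rule lipschitz_sum_le_wasserstein[OF assms(1,2)])
  moreover have "(\<Sum>w\<in>V. of_bool (w \<in> S) * x w) = (\<Sum>w\<in>S. x w)" for x :: "'a \<Rightarrow> real"
    using assms(3) finite_V by (simp add: sum.inter_restrict[symmetric] Int_absorb1)
  ultimately show ?thesis by simp
qed

section \<open>Convergence\<close>

lemma vertex_with_even_and_odd_walks:
  assumes "\<not> bipartite V E" "u \<in> V"
  shows "\<exists>c\<in>V. (\<exists>n. even n \<and> walk E n c u) \<and> (\<exists>n. odd n \<and> walk E n c u)"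
proof (rule ccontr)
  assume no_such: "\<not> ?thesis"
  define A where "A = {x\<in>V. \<exists>n. even n \<and> walk E n x u}"
  have sides: "x \<in> A \<longleftrightarrow> y \<notin> A" if e: "E x y" for x y
  proof
    assume "x \<in> A"
    then obtain n where "even n" "walk E n x u" unfolding A_def by blast
    then have "odd (Suc n)" "walk E (Suc n) y u" using e edge_sym by (auto intro: walkS)
    then show "y \<notin> A" using no_such unfolding A_def by blast
  next
    assume "y \<notin> A"
    have xy: "x \<in> V" "y \<in> V" using edge_in_V[OF e] by auto
    obtain n where n: "walk E n y u" using walk_exists[OF xy(2) assms(2)] by blast
    then have "odd n" using \<open>y \<notin> A\<close> xy unfolding A_def by blast
    then have "even (Suc n)" "walk E (Suc n) x u" using e n by (auto intro: walkS)
    then show "x \<in> A" using xy unfolding A_def by blast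
  qed
  moreover have "A \<subseteq> V" unfolding A_def by blast
  ultimately show False using assms(1) unfolding bipartite_def by blast
qed

lemma even_walk_if_not_bipartite:
  assumes "\<not> bipartite V E" "a \<in> V" "u \<in> V"
  shows "\<exists>n. even n \<and> walk E n a u"
proof -
  obtain c ne no where c: "c \<in> V" "even ne" "walk E ne c u" "odd no" "walk E no c u"
    using vertex_with_even_and_odd_walks[OF assms(1,3)] by blast
  obtain l where l: "walk E l a c" using walk_exists[OF assms(2) c(1)] by blast
  show ?thesis
  proof (cases "even l")
    case True
    then show ?thesis using walk_append[OF l c(3)] c(2) by (intro exI[of _ "l + ne"]) simp
  next
    case False
    then show ?thesis using walk_append[OF l c(5)] c(4) by (intro exI[of _ "l + no"]) simp
  qed
qed

lemma l1_walk_dist_tendsto_stationary: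
  assumes g: "0 \<le> g" "g < 1" and aperiodic: "0 < g \<or> \<not> bipartite V E" and u: "u \<in> V"
  shows "(\<lambda>n. l1 (\<lambda>w. walk_dist V E g u n w - stationary w)) \<longlonglongrightarrow> 0"
proof -
  have even_walks: "\<exists>n. even n \<and> walk (lazy_edge g) n a u" if a: "a \<in> V" for a
  proof (cases "0 < g")
    case True
    obtain n where "walk E n a u" using walk_exists[OF a u] by blast
    then have "walk (lazy_edge g) (n + n) a u"
      using True by (intro walk_add_loops walk_lazy_edge) (simp add: lazy_edge_def)
    then show ?thesis by (intro exI[of _ "n + n"]) simp
  next
    case False
    then obtain n where "even n" "walk E n a u"
      using even_walk_if_not_bipartite[OF _ a u] aperiodic by auto
    then show ?thesis by (intro exI[of _ n]) (simp add: walk_lazy_edge)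
  qed
  obtain c where "E u c" using no_isolated[OF u] by blast
  then have uc: "lazy_edge g u c" "lazy_edge g c u" using edge_sym by (auto simp: lazy_edge_def)
  obtain m where m: "0 < m" and walks: "\<And>a. a \<in> V \<Longrightarrow> walk (lazy_edge g) m a u"
    using common_even_walk_length[OF finite_V uc even_walks] by blast
  have "(\<Sum>w\<in>V. (if w = u then 1 else 0) - stationary w) = 0"
    using u finite_V sum_stationary by (auto simp: sum_subtractf)
  then have "(\<lambda>n. l1 ((P g ^^ n) (\<lambda>w. (if w = u then 1 else 0) - stationary w))) \<longlonglongrightarrow> 0"
    by (intro l1_funpow_walk_step_tendsto_zero[OF g order_refl u m walks]) auto
  then show ?thesis
    unfolding funpow_walk_step_diff funpow_walk_step_stationary walk_dist_def .
qed

lemma l1_walk_dist_tendsto_bipartite: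
  assumes A: "\<And>x y. E x y \<Longrightarrow> x \<in> A \<longleftrightarrow> y \<notin> A"
    and u: "u \<in> V" and v: "v \<in> V" and uv: "even l" "walk E l u v"
  shows "(\<lambda>n. l1 (\<lambda>w. walk_dist V E 0 u n w - walk_dist V E 0 v n w)) \<longlonglongrightarrow> 0"
proof -
  define S where "S = {w\<in>V. (w \<in> A) = (u \<in> A)}"
  have even_walks: "\<exists>n. even n \<and> walk E n a u" if a: "a \<in> S" for a
  proof -
    obtain n where "walk E n a u" using walk_exists a u unfolding S_def by blast
    moreover from this have "even n" using walk_parity[OF A] a unfolding S_def by blast
    ultimately show ?thesis by blast
  qed
  obtain c where "E u c" using no_isolated[OF u] by blast
  then obtain m where m: "0 < m" and walks: "\<And>a. a \<in> S \<Longrightarrow> walk E m a u"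
    using common_even_walk_length[of S E u c] even_walks edge_sym finite_V unfolding S_def by auto
  \<comment> \<open>u reaches itself in m steps, so m is even and \<open>P 0 ^^ m\<close> preserves the side of u\<close>
  have "even m" using walk_parity[OF A walks[of u]] u unfolding S_def by (cases "u \<in> A") auto
  have invariant: "(P 0 ^^ m) y w = 0" if "\<forall>w\<in>V - S. y w = 0" "w \<in> V - S" for y w
    using funpow_walk_step_0_side[OF A, of "u \<in> A" y m] that \<open>even m\<close> unfolding S_def by auto
  have "v \<in> S" using walk_parity[OF A uv(2)] uv(1) v unfolding S_def by simp
  then have "(\<lambda>n. l1 ((P 0 ^^ n) (\<lambda>w. (if w = u then 1 else 0) - (if w = v then 1 else 0)))) \<longlonglongrightarrow> 0"
    using walks u v finite_V
    by (intro l1_funpow_walk_step_tendsto_zero[OF order_refl zero_less_one _ u m _ invariant])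
      (auto simp: S_def walk_lazy_edge sum_subtractf)
  then show ?thesis unfolding funpow_walk_step_diff walk_dist_def .
qed

lemma wasserstein_tendsto_zero_if_regime:
  assumes "0 \<le> \<alpha>" "\<alpha> \<le> \<beta>" "\<beta> \<le> 1" and u: "u \<in> V" and v: "v \<in> V"
    and regime: "(0 < \<alpha> \<and> \<alpha> \<le> \<beta> \<and> \<beta> < 1) \<or> (\<alpha> = 1 \<and> \<beta> = 1 \<and> u = v)
       \<or> (\<not> bipartite V E \<and> 0 = \<alpha> \<and> \<alpha> \<le> \<beta> \<and> \<beta> < 1)
       \<or> (\<alpha> = 0 \<and> \<beta> = 0 \<and> (\<exists>n. even n \<and> walk E n u v))"
  shows "(\<lambda>k. wasserstein V E (walk_dist V E \<alpha> u k) (walk_dist V E \<beta> v k)) \<longlonglongrightarrow> 0"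
proof (rule wasserstein_tendsto_zero_if_l1)
  show "distribution (walk_dist V E \<alpha> u n)" "distribution (walk_dist V E \<beta> v n)" for n
    using assms by (simp_all add: distribution_walk_dist)
  consider (aperiodic) "\<alpha> < 1" "\<beta> < 1" "0 < \<alpha> \<or> \<not> bipartite V E" "0 < \<beta> \<or> \<not> bipartite V E"
    | (stuck) "\<alpha> = \<beta>" "u = v"
    | (periodic) "\<alpha> = 0" "\<beta> = 0" "bipartite V E" "\<exists>n. even n \<and> walk E n u v"
    using regime assms(1,2) by (cases "bipartite V E") auto
  then show "(\<lambda>n. l1 (\<lambda>w. walk_dist V E \<alpha> u n w - walk_dist V E \<beta> v n w)) \<longlonglongrightarrow> 0"
  proof cases
    case aperiodic
    have "(\<lambda>n. l1 (\<lambda>w. walk_dist V E \<alpha> u n w - stationary w)) \<longlonglongrightarrow> 0"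
      using aperiodic assms(1) u by (intro l1_walk_dist_tendsto_stationary) auto
    moreover have "(\<lambda>n. l1 (\<lambda>w. walk_dist V E \<beta> v n w - stationary w)) \<longlonglongrightarrow> 0"
      using aperiodic assms(1,2) v by (intro l1_walk_dist_tendsto_stationary) auto
    ultimately show ?thesis by (rule l1_diff_tendsto_zero)
  next
    case stuck
    then show ?thesis by (simp add: l1_def)
  next
    case periodic
    then obtain A l where A: "\<And>x y. E x y \<Longrightarrow> x \<in> A \<longleftrightarrow> y \<notin> A"
      and l: "even l" "walk E l u v"
      unfolding bipartite_def by blast
    show ?thesis using l1_walk_dist_tendsto_bipartite[OF A u v l] periodic(1,2) by simp
  qed
qed

section \<open>Divergence\<close>

lemma not_tendsto_stuck_distinct:
  assumes u: "u \<in> V" and v: "v \<in> V" and uv: "u \<noteq> v"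
  shows "\<not> (\<lambda>n. wasserstein V E (walk_dist V E 1 u n) (walk_dist V E 1 v n)) \<longlonglongrightarrow> 0"
proof (rule not_tendsto_zero_if_ge)
  fix n
  have "\<bar>(\<Sum>w\<in>{u}. walk_dist V E 1 u n w) - (\<Sum>w\<in>{u}. walk_dist V E 1 v n w)\<bar>
      \<le> wasserstein V E (walk_dist V E 1 u n) (walk_dist V E 1 v n)"
    using u v by (intro sum_diff_le_wasserstein distribution_walk_dist) auto
  then show "1 \<le> wasserstein V E (walk_dist V E 1 u n) (walk_dist V E 1 v n)"
    using uv by (simp add: walk_dist_1)
qed simp

lemma not_tendsto_moving_stuck:
  assumes \<alpha>: "0 \<le> \<alpha>" "\<alpha> < 1" and u: "u \<in> V" and v: "v \<in> V"
  shows "\<not> (\<lambda>n. wasserstein V E (walk_dist V E \<alpha> u n) (walk_dist V E 1 v n)) \<longlonglongrightarrow> 0"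
proof
  assume lim: "(\<lambda>n. wasserstein V E (walk_dist V E \<alpha> u n) (walk_dist V E 1 v n)) \<longlonglongrightarrow> 0"
  define s where "s n = walk_dist V E \<alpha> u n v" for n
  have "\<bar>s n - 1\<bar> \<le> wasserstein V E (walk_dist V E \<alpha> u n) (walk_dist V E 1 v n)" for n
  proof -
    have "\<bar>(\<Sum>w\<in>{v}. walk_dist V E \<alpha> u n w) - (\<Sum>w\<in>{v}. walk_dist V E 1 v n w)\<bar>
        \<le> wasserstein V E (walk_dist V E \<alpha> u n) (walk_dist V E 1 v n)"
      using \<alpha> u v by (intro sum_diff_le_wasserstein distribution_walk_dist) auto
    then show ?thesis unfolding s_def walk_dist_1 by simp
  qed
  then have "(\<lambda>n. \<bar>s n - 1\<bar>) \<longlonglongrightarrow> 0"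
    by (intro tendsto_sandwich[OF _ _ tendsto_const lim]) simp_all
  then have s: "s \<longlonglongrightarrow> 1" by (simp add: tendsto_rabs_zero_iff LIM_zero_iff)
  have "s (Suc n) \<le> \<alpha> * s n + (1 - \<alpha>) * (1 - s n)" for n
    unfolding s_def walk_dist_Suc using \<alpha> u v by (intro walk_step_at_le distribution_walk_dist) auto
  moreover have "(\<lambda>n. \<alpha> * s n + (1 - \<alpha>) * (1 - s n)) \<longlonglongrightarrow> \<alpha> * 1 + (1 - \<alpha>) * (1 - 1)"
    by (intro tendsto_add tendsto_mult tendsto_diff tendsto_const s)
  ultimately have "1 \<le> \<alpha> * 1 + (1 - \<alpha>) * (1 - 1)"
    using LIMSEQ_le[OF LIMSEQ_Suc[OF s]] by blast
  then show False using \<alpha> by simp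
qed

lemma not_tendsto_periodic_lazy:
  assumes bip: "bipartite V E" and \<beta>: "0 < \<beta>" "\<beta> < 1" and u: "u \<in> V" and v: "v \<in> V"
  shows "\<not> (\<lambda>n. wasserstein V E (walk_dist V E 0 u n) (walk_dist V E \<beta> v n)) \<longlonglongrightarrow> 0"
proof
  assume lim: "(\<lambda>n. wasserstein V E (walk_dist V E 0 u n) (walk_dist V E \<beta> v n)) \<longlonglongrightarrow> 0"
  obtain A where A: "A \<subseteq> V" "\<And>x y. E x y \<Longrightarrow> x \<in> A \<longleftrightarrow> y \<notin> A"
    using bip unfolding bipartite_def by blast
  define s where "s n = (\<Sum>w\<in>A. walk_dist V E \<beta> v n w)" for n
  have close: "\<bar>of_bool ((u \<in> A) = even n) - s n\<bar>
      \<le> wasserstein V E (walk_dist V E 0 u n) (walk_dist V E \<beta> v n)" for n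
  proof -
    have "\<bar>(\<Sum>w\<in>A. walk_dist V E 0 u n w) - s n\<bar>
        \<le> wasserstein V E (walk_dist V E 0 u n) (walk_dist V E \<beta> v n)"
      unfolding s_def using u v \<beta>
      by (intro sum_diff_le_wasserstein[OF _ _ A(1)] distribution_walk_dist) auto
    then show ?thesis by (subst (asm) sum_walk_dist_0_side[OF A(2,1) u])
  qed
  have lazy: "\<beta> * s n \<le> s (Suc n)" for n
    unfolding s_def sum_distrib_left walk_dist_Suc using \<beta> walk_dist_nonneg
    by (intro sum_mono walk_step_ge_lazy) auto
  obtain N where "\<forall>n\<ge>N. norm (wasserstein V E (walk_dist V E 0 u n) (walk_dist V E \<beta> v n) - 0) < \<beta> / 4"
    using LIMSEQ_D[OF lim, of "\<beta> / 4"] \<beta> by auto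
  then have N: "wasserstein V E (walk_dist V E 0 u n) (walk_dist V E \<beta> v n) < \<beta> / 4" if "N \<le> n" for n
    using that by fastforce
  \<comment> \<open>at time n the non-lazy walk is on A, so the lazy one has almost all its mass on A and
    keeps about \<beta> of it there at time n + 1, when the non-lazy walk is off A\<close>
  define n where "n = 2 * N + of_bool (u \<notin> A)"
  have n: "(u \<in> A) = even n" "N \<le> n" unfolding n_def by auto
  then have "\<bar>1 - s n\<bar> < \<beta> / 4"
    using close[of n] N[of n] by simp
  then have "1 - \<beta> / 4 \<le> s n" by linarith
  then have "\<beta> * (1 - \<beta> / 4) \<le> \<beta> * s n"
    using \<beta> by (intro mult_left_mono) auto
  moreover have "\<bar>0 - s (Suc n)\<bar> < \<beta> / 4"
    using close[of "Suc n"] N[of "Suc n"] n by simp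
  moreover have "\<beta> * \<beta> \<le> \<beta>" using \<beta> by (simp add: mult_left_le)
  ultimately show False using lazy[of n] \<beta> by (simp add: algebra_simps)
qed

lemma not_tendsto_periodic_odd:
  assumes bip: "bipartite V E" and u: "u \<in> V" and v: "v \<in> V" and odd: "\<nexists>n. even n \<and> walk E n u v"
  shows "\<not> (\<lambda>n. wasserstein V E (walk_dist V E 0 u n) (walk_dist V E 0 v n)) \<longlonglongrightarrow> 0"
proof (rule not_tendsto_zero_if_ge)
  fix n :: nat
  obtain A where A: "A \<subseteq> V" "\<And>x y. E x y \<Longrightarrow> x \<in> A \<longleftrightarrow> y \<notin> A"
    using bip unfolding bipartite_def by blast
  obtain l where "walk E l u v" using walk_exists[OF u v] by blast
  then have "v \<in> A \<longleftrightarrow> u \<notin> A" using walk_parity[OF A(2)] odd by blast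
  then have "\<bar>of_bool ((u \<in> A) = even n) - of_bool ((v \<in> A) = even n) :: real\<bar> = 1"
    by auto
  moreover have "\<bar>(\<Sum>w\<in>A. walk_dist V E 0 u n w) - (\<Sum>w\<in>A. walk_dist V E 0 v n w)\<bar>
      \<le> wasserstein V E (walk_dist V E 0 u n) (walk_dist V E 0 v n)"
    using u v by (intro sum_diff_le_wasserstein[OF _ _ A(1)] distribution_walk_dist) auto
  ultimately show "1 \<le> wasserstein V E (walk_dist V E 0 u n) (walk_dist V E 0 v n)"
    using sum_walk_dist_0_side[OF A(2,1) u, of n] sum_walk_dist_0_side[OF A(2,1) v, of n] by simp
qed simp

lemma regime_if_wasserstein_tendsto_zero:
  assumes "0 \<le> \<alpha>" "\<alpha> \<le> \<beta>" "\<beta> \<le> 1" and u: "u \<in> V" and v: "v \<in> V"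
    and lim: "(\<lambda>k. wasserstein V E (walk_dist V E \<alpha> u k) (walk_dist V E \<beta> v k)) \<longlonglongrightarrow> 0"
  shows "(0 < \<alpha> \<and> \<alpha> \<le> \<beta> \<and> \<beta> < 1) \<or> (\<alpha> = 1 \<and> \<beta> = 1 \<and> u = v)
       \<or> (\<not> bipartite V E \<and> 0 = \<alpha> \<and> \<alpha> \<le> \<beta> \<and> \<beta> < 1)
       \<or> (\<alpha> = 0 \<and> \<beta> = 0 \<and> (\<exists>n. even n \<and> walk E n u v))"
proof (rule ccontr)
  assume "\<not> ?thesis"
  then consider (stuck_distinct) "\<alpha> = 1" "\<beta> = 1" "u \<noteq> v"
    | (moving_stuck) "\<alpha> < 1" "\<beta> = 1"
    | (periodic_lazy) "bipartite V E" "\<alpha> = 0" "0 < \<beta>" "\<beta> < 1"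
    | (periodic_odd) "bipartite V E" "\<alpha> = 0" "\<beta> = 0" "\<nexists>n. even n \<and> walk E n u v"
    using assms(1-3) by (cases "\<beta> < 1"; cases "\<alpha> = 0"; cases "\<alpha> = 1"; cases "\<beta> = 0") auto
  then show False
  proof cases
    case stuck_distinct
    then show False using lim not_tendsto_stuck_distinct[OF u v] by simp
  next
    case moving_stuck
    then show False using lim not_tendsto_moving_stuck[OF assms(1) _ u v] by simp
  next
    case periodic_lazy
    then show False using lim not_tendsto_periodic_lazy[OF _ _ _ u v] by simp
  next
    case periodic_odd
    then show False using lim not_tendsto_periodic_odd[OF _ u v] by simp
  qed
qed

end

theorem theorem3p4:
  fixes V :: "'a set" and E :: "'a \<Rightarrow> 'a \<Rightarrow> bool" and u v :: 'a and \<alpha> \<beta> :: real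
  assumes "simple_graph V E" and "connected_graph V E"
    and "\<exists>x y. E x y"
    and "u \<in> V" and "v \<in> V"
    and "0 \<le> \<alpha>" and "\<alpha> \<le> \<beta>" and "\<beta> \<le> 1"
  shows "(\<lambda>k. wasserstein V E (walk_dist V E \<alpha> u k) (walk_dist V E \<beta> v k)) \<longlonglongrightarrow> 0
    \<longleftrightarrow> ((0 < \<alpha> \<and> \<alpha> \<le> \<beta> \<and> \<beta> < 1)
       \<or> (\<alpha> = 1 \<and> \<beta> = 1 \<and> u = v)
       \<or> (\<not> bipartite V E \<and> 0 = \<alpha> \<and> \<alpha> \<le> \<beta> \<and> \<beta> < 1)
       \<or> (\<alpha> = 0 \<and> \<beta> = 0 \<and> (\<exists>n. even n \<and> walk E n u v)))"
proof -
  obtain x y where "E x y" using assms(3) by blast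
  interpret connected_walk_graph V E
    by unfold_locales (use assms(1,2) connected_graph_no_isolated[OF assms(1,2) \<open>E x y\<close>] in auto)
  show ?thesis
    using assms(4-8) regime_if_wasserstein_tendsto_zero wasserstein_tendsto_zero_if_regime by blast
qed

end
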